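(* Let $m,k,d$ be positive integers with $d\ge k$, and let $a_1,\dots,a_k$ be positive integers with $a_1+\dots+a_k\le m$. Let $S$ be a uniformly random subset of $[m]$ of size $d$. Among all families $\{A_1,\dots,A_k\}$ of subsets of $[m]$ with $|A_i|=a_i$ for each $i$, the probability $$\mathbb P\big(\{S\cap A_1,\dots,S\cap A_k\}\text{ has a system of distinct representatives}\big)$$ is maximised when the sets $A_1,\dots,A_k$ are mutually disjoint.
   Context: A system of distinct representatives for sets $B_1,\dots,B_k$ is a choice of elements $b_i\in B_i$ with $b_1,\dots,b_k$ pairwise distinct. *)

theory Defs
  imports "HOL-Probability.Probability"
begin

definition has_SDR :: "nat \<Rightarrow> (nat \<Rightarrow> 'a set) \<Rightarrow> bool" where
  "has_SDR k B \<longleftrightarrow> (\<exists>b. (\<forall>i\<in>{1..k}. b i \<in> B i) \<and> inj_on b {1..k})"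

definition unif_subsets :: "nat \<Rightarrow> nat \<Rightarrow> nat set pmf" where
  "unif_subsets m d = pmf_of_set {S. S \<subseteq> {1..m} \<and> card S = d}"

definition SDR_prob :: "nat \<Rightarrow> nat \<Rightarrow> nat \<Rightarrow> (nat \<Rightarrow> nat set) \<Rightarrow> real" where
  "SDR_prob m d k A = measure_pmf.prob (unif_subsets m d) {S. has_SDR k (\<lambda>i. S \<inter> A i)}"

end

theory Submission
  imports Defs "HOL-Combinatorics.Permutations" "HOL-Library.Disjoint_Sets"
begin

text \<open>
  Two operations on the family never decrease the number of d-sets S for which
  the traces S \<inter> A i have an SDR. The first shifts a point x out of A j to a point y
  lying in no A i: every S that loses its SDR contains x but not y, and its
  compression S - {x} \<union> {y} gains one, so compression injects the losers into the
  winners. The second relabels [m] by a permutation. While two of the sets meet,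
  their union has fewer than \<Sum> a i \<le> m points, so a free y exists and shifting
  strictly enlarges the union; hence shifts make the family disjoint. Any two
  disjoint families with the same sizes differ by a permutation of [m].
\<close>

definition SDR_subsets :: "nat \<Rightarrow> nat \<Rightarrow> nat \<Rightarrow> (nat \<Rightarrow> nat set) \<Rightarrow> nat set set" where
  "SDR_subsets m d k A = {S. S \<subseteq> {1..m} \<and> card S = d \<and> has_SDR k (\<lambda>i. S \<inter> A i)}"

lemma finite_SDR_subsets: "finite (SDR_subsets m d k A)"
  by (rule finite_subset[of _ "Pow {1..m}"]) (auto simp: SDR_subsets_def)

lemma SDR_prob_eq_card:
  assumes "d \<le> m"
  shows "SDR_prob m d k A = card (SDR_subsets m d k A) / (m choose d)"
proof -
  let ?\<Omega> = "{S. S \<subseteq> {1..m} \<and> card S = d}"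
  have "{1..d} \<in> ?\<Omega>"
    using assms by auto
  then have "?\<Omega> \<noteq> {}"
    by blast
  moreover have "card ?\<Omega> = m choose d"
    using n_subsets[of "{1..m}" d] by simp
  moreover have "finite ?\<Omega>"
    by (rule finite_subset[of _ "Pow {1..m}"]) auto
  moreover have "?\<Omega> \<inter> {S. has_SDR k (\<lambda>i. S \<inter> A i)} = SDR_subsets m d k A"
    by (auto simp: SDR_subsets_def)
  ultimately show ?thesis
    unfolding SDR_prob_def unif_subsets_def by (simp add: measure_pmf_of_set)
qed

lemma card_insert_Diff_singleton:
  assumes "finite S" and "x \<in> S" and "y \<notin> S"
  shows "card (insert y (S - {x})) = card S"
  using assms by (metis DiffE card_Suc_Diff1 card_insert_disjoint finite_Diff)

lemma has_SDR_image:
  assumes "has_SDR k B" and "inj f"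
  shows "has_SDR k (\<lambda>i. f ` B i)"
proof -
  obtain b where "\<forall>i\<in>{1..k}. b i \<in> B i" and "inj_on b {1..k}"
    using assms(1) unfolding has_SDR_def by blast
  then have "\<forall>i\<in>{1..k}. (f \<circ> b) i \<in> f ` B i" and "inj_on (f \<circ> b) {1..k}"
    using assms(2) by (auto intro: comp_inj_on inj_on_subset)
  then show ?thesis
    unfolding has_SDR_def by blast
qed

subsection \<open>Shifting a point to a free point\<close>

lemma has_SDR_shift:
  fixes A :: "nat \<Rightarrow> 'a set" and j k :: nat and x y :: 'a
  defines "A' \<equiv> A(j := insert y (A j - {x}))"
  assumes j: "j \<in> {1..k}" and fresh: "\<forall>i\<in>{1..k}. y \<notin> A i"
    and SDR: "has_SDR k (\<lambda>i. S \<inter> A i)" and no_SDR': "\<not> has_SDR k (\<lambda>i. S \<inter> A' i)"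
  shows "x \<in> S" and "y \<notin> S" and "has_SDR k (\<lambda>i. insert y (S - {x}) \<inter> A' i)"
proof -
  obtain b where b: "\<forall>i\<in>{1..k}. b i \<in> S \<inter> A i" and inj_b: "inj_on b {1..k}"
    using SDR unfolding has_SDR_def by blast
  have bj: "b j = x"
  proof (rule ccontr)
    assume "b j \<noteq> x"
    then have "\<forall>i\<in>{1..k}. b i \<in> S \<inter> A' i"
      using b unfolding A'_def by auto
    with inj_b no_SDR' show False
      unfolding has_SDR_def by blast
  qed
  then show "x \<in> S"
    using b j by auto
  have inj_b': "inj_on (b(j := y)) {1..k}"
    using inj_b fresh b by (intro inj_on_fun_updI) auto
  show "y \<notin> S"
  proof
    assume "y \<in> S"
    then have "\<forall>i\<in>{1..k}. (b(j := y)) i \<in> S \<inter> A' i"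
      using b unfolding A'_def by auto
    with inj_b' no_SDR' show False
      unfolding has_SDR_def by blast
  qed
  have "b i \<noteq> x" if "i \<in> {1..k}" "i \<noteq> j" for i
    using inj_b that j bj by (metis inj_onD)
  then have "\<forall>i\<in>{1..k}. (b(j := y)) i \<in> insert y (S - {x}) \<inter> A' i"
    using b unfolding A'_def by auto
  with inj_b' show "has_SDR k (\<lambda>i. insert y (S - {x}) \<inter> A' i)"
    unfolding has_SDR_def by blast
qed

lemma has_SDR_unshift:
  assumes fresh: "\<forall>i\<in>{1..k}. y \<notin> A i"
    and SDR: "has_SDR k (\<lambda>i. insert y (S - {x}) \<inter> A i)"
  shows "has_SDR k (\<lambda>i. S \<inter> (A(j := insert y (A j - {x}))) i)"
proof -
  obtain b where b: "\<forall>i\<in>{1..k}. b i \<in> insert y (S - {x}) \<inter> A i" and "inj_on b {1..k}"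
    using SDR unfolding has_SDR_def by blast
  moreover have "\<forall>i\<in>{1..k}. b i \<in> S \<inter> (A(j := insert y (A j - {x}))) i"
    using b fresh by fastforce
  ultimately show ?thesis
    unfolding has_SDR_def by blast
qed

lemma card_le_if_inj_on_Diff:
  assumes fin: "finite B" and inj: "inj_on f (A - B)" and into: "f ` (A - B) \<subseteq> B - A"
  shows "card A \<le> card B"
proof -
  have "finite (f ` (A - B))"
    using finite_subset[OF into] fin by simp
  then have "finite (A - B)"
    using inj by (rule finite_imageD)
  moreover have "A \<subseteq> B \<union> (A - B)"
    by blast
  ultimately have "finite A"
    using fin by (meson finite_UnI finite_subset)
  have "card (A - B) \<le> card (B - A)"
    using card_inj_on_le[OF inj into] fin by simp
  then show ?thesis
    using card_Int_Diff[OF \<open>finite A\<close>, of B] card_Int_Diff[OF fin, of A] by (simp add: Int_commute)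
qed

lemma card_SDR_subsets_shift_le:
  assumes j: "j \<in> {1..k}" and y: "y \<in> {1..m}" and fresh: "\<forall>i\<in>{1..k}. y \<notin> A i"
  shows "card (SDR_subsets m d k A) \<le> card (SDR_subsets m d k (A(j := insert y (A j - {x}))))"
proof -
  define A' where "A' = A(j := insert y (A j - {x}))"
  define G where "G = SDR_subsets m d k A"
  define G' where "G' = SDR_subsets m d k A'"
  define compress where "compress S = insert y (S - {x})" for S
  have in_G': "S \<in> G' \<longleftrightarrow> has_SDR k (\<lambda>i. S \<inter> A' i)" if "S \<in> G" for S
    using that unfolding G_def G'_def SDR_subsets_def by auto
  have loser: "x \<in> S \<and> y \<notin> S \<and> has_SDR k (\<lambda>i. compress S \<inter> A' i)" if "S \<in> G - G'" for S
  proof -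
    have "has_SDR k (\<lambda>i. S \<inter> A i)"
      using that unfolding G_def SDR_subsets_def by simp
    moreover have "\<not> has_SDR k (\<lambda>i. S \<inter> A' i)"
      using in_G'[of S] that by blast
    ultimately show ?thesis
      using has_SDR_shift[OF j fresh, where S = S and x = x] unfolding A'_def compress_def by blast
  qed
  have "compress S \<in> G' - G" if S: "S \<in> G - G'" for S
  proof
    from S loser have x: "x \<in> S" "y \<notin> S" and SDR: "has_SDR k (\<lambda>i. compress S \<inter> A' i)"
      by auto
    have S_sub: "S \<subseteq> {1..m}" and "card S = d"
      using S unfolding G_def SDR_subsets_def by auto
    then have "card (compress S) = d"
      using card_insert_Diff_singleton[OF finite_subset[OF S_sub finite_atLeastAtMost] x]
      unfolding compress_def by simp
    with SDR S_sub y show "compress S \<in> G'"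
      unfolding G'_def SDR_subsets_def compress_def by auto
    show "compress S \<notin> G"
    proof
      assume "compress S \<in> G"
      then have "has_SDR k (\<lambda>i. insert y (S - {x}) \<inter> A i)"
        unfolding G_def SDR_subsets_def compress_def by simp
      then have "has_SDR k (\<lambda>i. S \<inter> A' i)"
        unfolding A'_def by (rule has_SDR_unshift[OF fresh])
      with in_G'[of S] S show False
        by blast
    qed
  qed
  then have into: "compress ` (G - G') \<subseteq> G' - G"
    by blast
  have inj: "inj_on compress (G - G')"
  proof (rule inj_onI)
    fix S1 S2 assume S1: "S1 \<in> G - G'" and S2: "S2 \<in> G - G'"
      and compressed: "compress S1 = compress S2"
    have "x \<in> S1" "y \<notin> S1" "x \<in> S2" "y \<notin> S2"
      using loser[OF S1] loser[OF S2] by simp_all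
    then have "S1 = insert x (compress S1 - {y})"
      unfolding compress_def by blast
    also have "\<dots> = insert x (compress S2 - {y})"
      by (simp only: compressed)
    also have "\<dots> = S2"
      using \<open>x \<in> S2\<close> \<open>y \<notin> S2\<close> unfolding compress_def by blast
    finally show "S1 = S2" .
  qed
  have "finite G'"
    unfolding G'_def by (rule finite_SDR_subsets)
  from card_le_if_inj_on_Diff[OF this inj into] show ?thesis
    unfolding G_def G'_def A'_def .
qed

lemma card_UN_less_sum_card:
  assumes I: "finite I" and fin: "\<forall>l\<in>I. finite (A l)" and i: "i \<in> I" and j: "j \<in> I"
    and "i \<noteq> j" and "x \<in> A i" and xj: "x \<in> A j"
  shows "card (\<Union>l\<in>I. A l) < (\<Sum>l\<in>I. card (A l))"
proof -
  have "(\<Union>l\<in>I. A l) = (\<Union>l\<in>I - {j}. A l) \<union> (A j - {x})"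
    using assms by blast
  then have "card (\<Union>l\<in>I. A l) \<le> card (\<Union>l\<in>I - {j}. A l) + card (A j - {x})"
    by (simp add: card_Un_le)
  also have "\<dots> \<le> (\<Sum>l\<in>I - {j}. card (A l)) + card (A j - {x})"
    using card_UN_le[of "I - {j}" A] I by simp
  also have "\<dots> < (\<Sum>l\<in>I - {j}. card (A l)) + card (A j)"
    using fin j xj by (intro add_strict_left_mono card_Diff1_less) auto
  also have "\<dots> = (\<Sum>l\<in>I. card (A l))"
    using sum.remove[OF I j, of "\<lambda>l. card (A l)"] by simp
  finally show ?thesis .
qed

lemma exists_shift_card_SDR_subsets_ge:
  assumes A: "\<forall>i\<in>{1..k}. A i \<subseteq> {1..m}" and sum: "(\<Sum>i=1..k. card (A i)) \<le> m"
    and "\<not> disjoint_family_on A {1..k}"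
  obtains A2 where "\<forall>i\<in>{1..k}. A2 i \<subseteq> {1..m} \<and> card (A2 i) = card (A i)"
    and "card (\<Union>i\<in>{1..k}. A i) < card (\<Union>i\<in>{1..k}. A2 i)"
    and "card (SDR_subsets m d k A) \<le> card (SDR_subsets m d k A2)"
proof -
  obtain i j x where i: "i \<in> {1..k}" and j: "j \<in> {1..k}" and "i \<noteq> j"
    and xi: "x \<in> A i" and xj: "x \<in> A j"
    using assms(3) unfolding disjoint_family_on_def by blast
  define U where "U = (\<Union>l\<in>{1..k}. A l)"
  have fin: "\<forall>l\<in>{1..k}. finite (A l)"
    using A finite_subset by blast
  have "card U < m"
    using card_UN_less_sum_card[OF _ fin i j \<open>i \<noteq> j\<close> xi xj] sum unfolding U_def by simp
  moreover have U: "U \<subseteq> {1..m}"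
    using A unfolding U_def by blast
  ultimately obtain y where y: "y \<in> {1..m}" "y \<notin> U"
    by (metis card_atLeastAtMost diff_Suc_1 subsetI subset_antisym nat_less_le)
  define A2 where "A2 = A(j := insert y (A j - {x}))"
  have fresh: "\<forall>l\<in>{1..k}. y \<notin> A l"
    using y unfolding U_def by blast
  have "card (A2 j) = card (A j)"
    using fin j xj fresh card_insert_Diff_singleton[of "A j" x y] unfolding A2_def by simp
  then have "\<forall>l\<in>{1..k}. A2 l \<subseteq> {1..m} \<and> card (A2 l) = card (A l)"
    using A y unfolding A2_def by auto
  moreover have "(\<Union>l\<in>{1..k}. A2 l) = insert y U"
    unfolding A2_def U_def using i j \<open>i \<noteq> j\<close> xi xj by auto
  then have "card U < card (\<Union>l\<in>{1..k}. A2 l)"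
    using y U finite_subset[OF U] by simp
  moreover have "card (SDR_subsets m d k A) \<le> card (SDR_subsets m d k A2)"
    unfolding A2_def by (rule card_SDR_subsets_shift_le[OF j y(1) fresh])
  ultimately show ?thesis
    using that unfolding U_def by blast
qed

lemma exists_disjoint_family_card_SDR_subsets_ge:
  assumes "\<forall>i\<in>{1..k}. A i \<subseteq> {1..m}" and "(\<Sum>i=1..k. card (A i)) \<le> m"
  shows "\<exists>A'. (\<forall>i\<in>{1..k}. A' i \<subseteq> {1..m} \<and> card (A' i) = card (A i))
    \<and> disjoint_family_on A' {1..k} \<and> card (SDR_subsets m d k A) \<le> card (SDR_subsets m d k A')"
  using assms
proof (induction "m - card (\<Union>i\<in>{1..k}. A i)" arbitrary: A rule: less_induct)
  case less
  show ?case
  proof (cases "disjoint_family_on A {1..k}")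
    case True
    then show ?thesis
      using less.prems by blast
  next
    case False
    obtain A2 where A2: "\<forall>i\<in>{1..k}. A2 i \<subseteq> {1..m} \<and> card (A2 i) = card (A i)"
      and bigger: "card (\<Union>i\<in>{1..k}. A i) < card (\<Union>i\<in>{1..k}. A2 i)"
      and le: "card (SDR_subsets m d k A) \<le> card (SDR_subsets m d k A2)"
      by (rule exists_shift_card_SDR_subsets_ge[OF less.prems False])
    have A2_sub: "\<forall>i\<in>{1..k}. A2 i \<subseteq> {1..m}"
      using A2 by blast
    then have "card (\<Union>i\<in>{1..k}. A2 i) \<le> m"
      using card_mono[OF finite_atLeastAtMost, of "\<Union>i\<in>{1..k}. A2 i" 1 m] by auto
    with bigger have "m - card (\<Union>i\<in>{1..k}. A2 i) < m - card (\<Union>i\<in>{1..k}. A i)"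
      by linarith
    moreover have "(\<Sum>i=1..k. card (A2 i)) \<le> m"
      using less.prems(2) A2 by simp
    ultimately obtain A' where "\<forall>i\<in>{1..k}. A' i \<subseteq> {1..m} \<and> card (A' i) = card (A2 i)"
      and "disjoint_family_on A' {1..k}"
      and "card (SDR_subsets m d k A2) \<le> card (SDR_subsets m d k A')"
      using less.hyps A2_sub by blast
    with A2 le show ?thesis
      by (intro exI[of _ A']) auto
  qed
qed

subsection \<open>Relabelling the ground set\<close>

lemma card_SDR_subsets_permutes_le:
  assumes p: "p permutes {1..m}"
  shows "card (SDR_subsets m d k A) \<le> card (SDR_subsets m d k (\<lambda>i. p ` A i))"
proof -
  have inj: "inj p"
    using p by (rule permutes_inj)
  have maps_into: "image p ` SDR_subsets m d k A \<subseteq> SDR_subsets m d k (\<lambda>i. p ` A i)"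
  proof
    fix T assume "T \<in> image p ` SDR_subsets m d k A"
    then obtain S where S: "S \<subseteq> {1..m}" "card S = d" "has_SDR k (\<lambda>i. S \<inter> A i)"
      and T: "T = p ` S"
      unfolding SDR_subsets_def by blast
    have "T \<subseteq> {1..m}"
      using S(1) permutes_image[OF p] T by blast
    moreover have "card T = d"
      using S(2) T card_image[OF inj_on_subset[OF inj subset_UNIV]] by blast
    moreover have "has_SDR k (\<lambda>i. T \<inter> p ` A i)"
      using has_SDR_image[OF S(3) inj] T by (simp add: image_Int[OF inj])
    ultimately show "T \<in> SDR_subsets m d k (\<lambda>i. p ` A i)"
      unfolding SDR_subsets_def by blast
  qed
  have "inj_on (image p) (SDR_subsets m d k A)"
    by (rule inj_on_image[OF inj_on_subset[OF inj subset_UNIV]])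
  from card_inj_on_le[OF this maps_into finite_SDR_subsets] show ?thesis .
qed

lemma transpose_image_Diff_subset:
  assumes A: "disjoint_family_on A I" and D: "disjoint_family_on D I"
    and j: "j \<in> I" and x: "x \<in> A j - D j" and z: "z \<in> D j - A j" and i: "i \<in> I"
  shows "Transposition.transpose x z ` A i - D i \<subseteq> Transposition.transpose x z ` (A i - D i - {x})"
proof
  fix u assume "u \<in> Transposition.transpose x z ` A i - D i"
  then obtain v where v: "v \<in> A i" "u = Transposition.transpose x z v" "u \<notin> D i"
    by blast
  have "v \<noteq> x"
    using v x z A i j by (cases "i = j") (auto simp: disjoint_family_on_def)
  moreover have "v \<notin> D i"
    using v \<open>v \<noteq> x\<close> z D i j
    by (cases "v = z"; cases "i = j") (auto simp: disjoint_family_on_def)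
  ultimately show "u \<in> Transposition.transpose x z ` (A i - D i - {x})"
    using v by blast
qed

lemma sum_card_transpose_image_Diff_less:
  assumes "disjoint_family_on A I" and "disjoint_family_on D I" and I: "finite I"
    and fin: "\<forall>i\<in>I. finite (A i)" and j: "j \<in> I" and x: "x \<in> A j - D j" and "z \<in> D j - A j"
  shows "(\<Sum>i\<in>I. card (Transposition.transpose x z ` A i - D i)) < (\<Sum>i\<in>I. card (A i - D i))"
proof (rule sum_strict_mono_ex1[OF I])
  have shrinks: "card (Transposition.transpose x z ` A i - D i) \<le> card (A i - D i - {x})"
    if i: "i \<in> I" for i
  proof -
    have "card (Transposition.transpose x z ` A i - D i)
        \<le> card (Transposition.transpose x z ` (A i - D i - {x}))"
      using transpose_image_Diff_subset[OF assms(1,2) j x \<open>z \<in> D j - A j\<close> i] fin i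
      by (intro card_mono) simp_all
    also have "\<dots> \<le> card (A i - D i - {x})"
      by (rule card_image_le) (use fin i in simp)
    finally show ?thesis .
  qed
  then show "\<forall>i\<in>I. card (Transposition.transpose x z ` A i - D i) \<le> card (A i - D i)"
    by (meson card_Diff1_le le_trans)
  show "\<exists>i\<in>I. card (Transposition.transpose x z ` A i - D i) < card (A i - D i)"
    using shrinks[OF j] card_Diff1_less[of "A j - D j" x] fin x j
    by (meson finite_Diff le_less_trans)
qed

lemma card_SDR_subsets_disjoint_le:
  assumes "\<forall>i\<in>{1..k}. A i \<subseteq> {1..m} \<and> D i \<subseteq> {1..m} \<and> card (A i) = card (D i)"
    and "disjoint_family_on A {1..k}" and D: "disjoint_family_on D {1..k}"
  shows "card (SDR_subsets m d k A) \<le> card (SDR_subsets m d k D)"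
  using assms(1,2)
proof (induction "\<Sum>i=1..k. card (A i - D i)" arbitrary: A rule: less_induct)
  case less
  have fin: "finite (A i)" "finite (D i)" if "i \<in> {1..k}" for i
    using less.prems(1) that finite_subset by blast+
  show ?case
  proof (cases "\<forall>i\<in>{1..k}. A i = D i")
    case True
    then show ?thesis
      unfolding SDR_subsets_def has_SDR_def by (simp cong: conj_cong)
  next
    case False
    then obtain j where j: "j \<in> {1..k}" and "A j \<noteq> D j"
      by blast
    then have "\<not> A j \<subseteq> D j" "\<not> D j \<subseteq> A j"
      using less.prems(1) fin by (metis card_subset_eq)+
    then obtain x z where x: "x \<in> A j - D j" and z: "z \<in> D j - A j"
      by blast
    define p where "p = Transposition.transpose x z"
    define A2 where "A2 i = p ` A i" for i
    have "x \<in> {1..m}" "z \<in> {1..m}"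
      using x z j less.prems(1) by blast+
    then have p: "p permutes {1..m}"
      unfolding p_def by (rule permutes_swap_id)
    have A2: "\<forall>i\<in>{1..k}. A2 i \<subseteq> {1..m} \<and> D i \<subseteq> {1..m} \<and> card (A2 i) = card (D i)"
    proof
      fix i assume i: "i \<in> {1..k}"
      have "A2 i \<subseteq> p ` {1..m}"
        using less.prems(1) i unfolding A2_def by blast
      moreover have "card (A2 i) = card (A i)"
        unfolding A2_def by (rule card_image[OF inj_on_subset[OF permutes_inj[OF p] subset_UNIV]])
      ultimately show "A2 i \<subseteq> {1..m} \<and> D i \<subseteq> {1..m} \<and> card (A2 i) = card (D i)"
        using less.prems(1) i permutes_image[OF p] by auto
    qed
    have "disjoint_family_on A2 {1..k}"
      using less.prems(2) permutes_inj[OF p]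
      unfolding A2_def disjoint_family_on_def by (simp add: image_Int[symmetric])
    moreover have "(\<Sum>i=1..k. card (A2 i - D i)) < (\<Sum>i=1..k. card (A i - D i))"
      unfolding A2_def p_def
      using sum_card_transpose_image_Diff_less[OF less.prems(2) D _ _ j x z] fin by simp
    ultimately have "card (SDR_subsets m d k A2) \<le> card (SDR_subsets m d k D)"
      using less.hyps A2 by blast
    moreover have "card (SDR_subsets m d k A) \<le> card (SDR_subsets m d k A2)"
      unfolding A2_def by (rule card_SDR_subsets_permutes_le[OF p])
    ultimately show ?thesis
      by simp
  qed
qed

theorem mainTheorem10:
  fixes m k d :: nat and a :: "nat \<Rightarrow> nat" and A D :: "nat \<Rightarrow> nat set"
  assumes "m > 0" "k > 0" "d > 0" "d \<ge> k" "d \<le> m"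
    and "\<forall>i\<in>{1..k}. a i > 0"
    and "(\<Sum>i=1..k. a i) \<le> m"
    and "\<forall>i\<in>{1..k}. A i \<subseteq> {1..m} \<and> card (A i) = a i"
    and "\<forall>i\<in>{1..k}. D i \<subseteq> {1..m} \<and> card (D i) = a i"
    and "\<forall>i\<in>{1..k}. \<forall>j\<in>{1..k}. i \<noteq> j \<longrightarrow> D i \<inter> D j = {}"
  shows "SDR_prob m d k A \<le> SDR_prob m d k D"
proof -
  have "(\<Sum>i=1..k. card (A i)) \<le> m"
    using assms(7,8) by simp
  then obtain A' where A': "\<forall>i\<in>{1..k}. A' i \<subseteq> {1..m} \<and> card (A' i) = card (A i)"
    and "disjoint_family_on A' {1..k}"
    and "card (SDR_subsets m d k A) \<le> card (SDR_subsets m d k A')"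
    using exists_disjoint_family_card_SDR_subsets_ge assms(8) by blast
  moreover have "card (SDR_subsets m d k A') \<le> card (SDR_subsets m d k D)"
    using A' assms(8-10) \<open>disjoint_family_on A' {1..k}\<close>
    by (intro card_SDR_subsets_disjoint_le) (auto simp: disjoint_family_on_def)
  ultimately show ?thesis
    unfolding SDR_prob_eq_card[OF assms(5)] by (simp add: divide_right_mono)
qed

end
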